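(* (i) For every non-negative integer $n$, \[ \sum_{k=0}^{n}(-1)^k\frac{2k+1}{2^{2k}(k+1)}\binom{n}{k}\binom{2k}{k}H_{k+1}O_{k+1}=-\frac{\binom{2n}{n}}{2^{2n}(n+1)}H_{n+1}(O_n-1)+\frac{1}{n+1}\sum_{k=1}^{n}\frac{\binom{2(n-k)}{n-k}}{2^{2(n-k)}k}\left(O_{n-k}-1\right). \] (ii) For every non-negative integer $n$ and all $r,s\in\mathbb{C}\setminus\mathbb{Z}^{-}$ with $s\neq0$ and $r-s\notin\mathbb{Z}^{-}$, \[ \begin{aligned} \sum_{k=1}^{n}(-1)^{k-1}\binom{n}{k}H_k\frac{H_{k+r-s}-H_s}{\binom{k+r}{s}} &=-\frac{r+1}{(r-s+1)^2}\sum_{k=1}^{n}\frac{1}{k\binom{n-k+r}{r-s+1}}-\frac{s}{r-s+1}\sum_{k=1}^{n}\frac{H_{n-k+s-1}-H_{r-s+1}}{k\binom{n-k+r}{r-s+1}}\\ &\quad+\frac{(r+1)H_n}{(r-s+1)^2\binom{n+r}{r-s+1}}-\frac{sH_n\left(H_{r-s+1}-H_{n+s-1}\right)}{(r-s+1)\binom{n+r}{r-s+1}}. \end{aligned} \]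
   Context: $\mathbb{Z}^{-}$ denotes the set of negative integers. For complex $z$ not a negative integer, $H_z=\psi(z+1)+\gamma$ ($\psi$ the digamma function, $\gamma$ Euler's constant); for integers $n\ge0$, $H_n=\sum_{j=1}^n 1/j$. The odd harmonic numbers are $O_n=\sum_{j=1}^n\frac{1}{2j-1}$ for integers $n\ge 0$ ($O_0=0$). Binomial coefficients with complex entries: $\binom{x}{y}=\frac{\Gamma(x+1)}{\Gamma(y+1)\Gamma(x-y+1)}$. *)

theory Defs
  imports "HOL-Analysis.Analysis"
begin

text \<open>Harmonic number at a complex argument: H_z = psi(z+1) + gamma.\<close>
definition Hc :: "complex \<Rightarrow> complex" where
  "Hc z = Digamma (z + 1) + euler_mascheroni"

definition oharm :: "nat \<Rightarrow> real" where
  "oharm n = (\<Sum>j=1..n. 1 / (2 * real j - 1))"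

definition cbinom :: "complex \<Rightarrow> complex \<Rightarrow> complex" where
  "cbinom x y = Gamma (x + 1) / (Gamma (y + 1) * Gamma (x - y + 1))"

definition negInts :: "complex set" where
  "negInts = {z. \<exists>m::nat. z = - of_nat (Suc m)}"

end

theory Submission
  imports Defs
begin

(* For the binomial transform B_a(m) = sum_{k<=m} (-1)^k C(m,k) a_k, the identity
   sum_{j=1}^n C(n-j,k)/j = C(n,k) (H_n - H_k) gives
   sum_k (-1)^k C(n,k) H_k a_k = H_n B_a(n) - sum_{j=1}^n B_a(n-j)/j,
   so both parts reduce to computing B_a. In both, a_k is a combination of (alpha)_k/(beta)_k and its
   derivative in alpha, (alpha)_k/(beta)_k sum_{j<k} 1/(alpha+j): in (ii) through
   Gamma(z+k) = (z)_k Gamma(z) and psi(z+k) = psi(z) + sum_{j<k} 1/(z+j), in (i) with alpha = 3/2,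
   beta = 2 since C(2k,k)/4^k = (1/2)_k/k!. Their binomial transforms are Chu-Vandermonde sums,
   proved by induction from B_a(m+1) = B_b(m) with b_k = a_k - a_{k+1}. *)

definition binomial_transform :: "(nat \<Rightarrow> 'a::comm_ring_1) \<Rightarrow> nat \<Rightarrow> 'a" where
  "binomial_transform f m = (\<Sum>k\<le>m. (-1)^k * of_nat (m choose k) * f k)"

lemma binomial_transform_0 [simp]: "binomial_transform f 0 = f 0"
  by (simp add: binomial_transform_def)

lemma binomial_transform_add:
  "binomial_transform (\<lambda>k. f k + g k) m = binomial_transform f m + binomial_transform g m"
  by (simp add: binomial_transform_def sum.distrib algebra_simps)

lemma binomial_transform_diff:
  "binomial_transform (\<lambda>k. f k - g k) m = binomial_transform f m - binomial_transform g m"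
  by (simp add: binomial_transform_def sum_subtractf algebra_simps)

lemma binomial_transform_cmult:
  "binomial_transform (\<lambda>k. c * f k) m = c * binomial_transform f m"
  by (simp add: binomial_transform_def sum_distrib_left algebra_simps)

lemma binomial_transform_Suc:
  "binomial_transform f (Suc m) = binomial_transform (\<lambda>k. f k - f (Suc k)) m"
proof -
  have "binomial_transform f m = (\<Sum>k\<le>Suc m. (-1)^k * of_nat (m choose k) * f k)"
    by (simp add: binomial_transform_def binomial_eq_0)
  also have "\<dots> = f 0 + (\<Sum>k\<le>m. (-1)^Suc k * of_nat (m choose Suc k) * f (Suc k))"
    by (subst sum.atMost_Suc_shift) simp
  finally have shift: "(\<Sum>k\<le>m. (-1)^Suc k * of_nat (m choose Suc k) * f (Suc k))
      = binomial_transform f m - f 0"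
    by simp
  have "binomial_transform f (Suc m)
      = f 0 + (\<Sum>k\<le>m. (-1)^Suc k * of_nat (m choose k) * f (Suc k))
        + (\<Sum>k\<le>m. (-1)^Suc k * of_nat (m choose Suc k) * f (Suc k))"
    unfolding binomial_transform_def
    by (subst sum.atMost_Suc_shift) (simp add: sum.distrib[symmetric] algebra_simps)
  also have "\<dots> = binomial_transform f m - binomial_transform (\<lambda>k. f (Suc k)) m"
    unfolding shift by (simp add: binomial_transform_def sum_negf)
  finally show ?thesis
    by (simp add: binomial_transform_diff)
qed

lemma binomial_transform_of_nat_mult:
  "binomial_transform (\<lambda>k. of_nat k * f k) (Suc m)
     = - of_nat (Suc m) * binomial_transform (\<lambda>k. f (Suc k)) m"
proof -
  have absorb: "(-1)^Suc k * of_nat (Suc m choose Suc k) * (of_nat (Suc k) * f (Suc k))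
      = - of_nat (Suc m) * ((-1)^k * of_nat (m choose k) * f (Suc k))" for k
  proof -
    have "(-1)^Suc k * of_nat (Suc m choose Suc k) * (of_nat (Suc k) * f (Suc k))
        = - ((-1)^k * (of_nat (Suc k) * of_nat (Suc m choose Suc k)) * f (Suc k))"
      by (simp only: power_Suc mult_ac) simp
    also have "of_nat (Suc k) * of_nat (Suc m choose Suc k) = (of_nat (Suc m) * of_nat (m choose k) :: 'a)"
      by (metis Suc_times_binomial of_nat_mult)
    finally show ?thesis
      by (simp add: algebra_simps del: binomial_Suc_Suc)
  qed
  show ?thesis
    unfolding binomial_transform_def sum.atMost_Suc_shift absorb
    by (simp add: sum_distrib_left)
qed

definition rising_harm :: "'a::field \<Rightarrow> nat \<Rightarrow> 'a" where
  "rising_harm x k = (\<Sum>j<k. 1 / (x + of_nat j))"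

lemma rising_harm_0 [simp]: "rising_harm x 0 = 0"
  by (simp add: rising_harm_def)

lemma rising_harm_Suc: "rising_harm x (Suc k) = rising_harm x k + 1 / (x + of_nat k)"
  by (simp add: rising_harm_def)

lemma rising_harm_Suc_left: "rising_harm x (Suc k) = 1 / x + rising_harm (x + 1) k"
  unfolding rising_harm_def by (subst sum.lessThan_Suc_shift) (simp add: add_ac)

lemma not_nonpos_Ints_add_of_nat:
  assumes "z \<notin> \<int>\<^sub>\<le>\<^sub>0"
  shows "z + of_nat k \<notin> \<int>\<^sub>\<le>\<^sub>0"
  using assms nonpos_Ints_diff_Nats[of "z + of_nat k" "of_nat k"] by auto

lemma pochhammer_nonzero:
  fixes z :: "'a::field_char_0"
  shows "z \<notin> \<int>\<^sub>\<le>\<^sub>0 \<Longrightarrow> pochhammer z k \<noteq> 0"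
  by (auto simp: pochhammer_eq_0_iff)

lemma pochhammer_ratio_diff:
  fixes a b :: "'a::field_char_0"
  assumes "b \<notin> \<int>\<^sub>\<le>\<^sub>0"
  shows "pochhammer a k / pochhammer b k - pochhammer a (Suc k) / pochhammer b (Suc k)
      = (b - a) / b * (pochhammer a k / pochhammer (b + 1) k)"
proof -
  have "b + of_nat k \<noteq> 0"
    using not_nonpos_Ints_add_of_nat[OF assms, of k] by auto
  then have "pochhammer a k / pochhammer b k = (b + of_nat k) * pochhammer a k / pochhammer b (Suc k)"
    by (simp add: pochhammer_rec')
  then have "pochhammer a k / pochhammer b k - pochhammer a (Suc k) / pochhammer b (Suc k)
      = ((b + of_nat k) * pochhammer a k - (a + of_nat k) * pochhammer a k) / pochhammer b (Suc k)"
    by (simp add: pochhammer_rec'[of a] diff_divide_distrib)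
  also have "\<dots> = (b - a) * pochhammer a k / (b * pochhammer (b + 1) k)"
    by (simp add: pochhammer_rec algebra_simps)
  finally show ?thesis
    by simp
qed

lemma binomial_transform_pochhammer_ratio:
  fixes a b :: "'a::field_char_0"
  assumes "b \<notin> \<int>\<^sub>\<le>\<^sub>0"
  shows "binomial_transform (\<lambda>k. pochhammer a k / pochhammer b k) m
       = pochhammer (b - a) m / pochhammer b m"
  using assms
proof (induction m arbitrary: b)
  case (Suc m)
  have "b \<noteq> 0" and b1: "b + 1 \<notin> \<int>\<^sub>\<le>\<^sub>0"
    using Suc.prems not_nonpos_Ints_add_of_nat[OF Suc.prems, of 1] by auto
  have "binomial_transform (\<lambda>k. pochhammer a k / pochhammer b k) (Suc m)
      = (b - a) / b * binomial_transform (\<lambda>k. pochhammer a k / pochhammer (b + 1) k) m"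
    by (simp only: binomial_transform_Suc pochhammer_ratio_diff[OF Suc.prems]
        binomial_transform_cmult)
  also have "\<dots> = (b - a) / b * (pochhammer (b - a + 1) m / pochhammer (b + 1) m)"
    using Suc.IH[OF b1] by (simp add: algebra_simps)
  also have "\<dots> = pochhammer (b - a) (Suc m) / pochhammer b (Suc m)"
    using \<open>b \<noteq> 0\<close> by (simp add: pochhammer_rec)
  finally show ?case .
qed simp

(* The derivative of the previous identity in a: rising_harm a k is the logarithmic derivative of
   pochhammer a k. *)
lemma binomial_transform_pochhammer_ratio_rising_harm:
  fixes a b :: "'a::field_char_0"
  assumes a: "a \<notin> \<int>\<^sub>\<le>\<^sub>0" and "b \<notin> \<int>\<^sub>\<le>\<^sub>0" "b - a \<notin> \<int>\<^sub>\<le>\<^sub>0"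
  shows "binomial_transform (\<lambda>k. pochhammer a k / pochhammer b k * rising_harm a k) m
       = - (pochhammer (b - a) m / pochhammer b m) * rising_harm (b - a) m"
  using assms(2,3)
proof (induction m arbitrary: b)
  case (Suc m)
  have "b \<noteq> 0" "b - a \<noteq> 0" and b1: "b + 1 \<notin> \<int>\<^sub>\<le>\<^sub>0" "b + 1 - a \<notin> \<int>\<^sub>\<le>\<^sub>0"
    using Suc.prems not_nonpos_Ints_add_of_nat[OF Suc.prems(1), of 1]
      not_nonpos_Ints_add_of_nat[OF Suc.prems(2), of 1]
    by (auto simp: algebra_simps)
  define q where "q = (\<lambda>k. pochhammer a k / pochhammer (b + 1) k)"
  have step: "pochhammer a k / pochhammer b k * rising_harm a k
        - pochhammer a (Suc k) / pochhammer b (Suc k) * rising_harm a (Suc k)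
      = (b - a) / b * (q k * rising_harm a k) - 1 / b * q k" for k
  proof -
    have "a + of_nat k \<noteq> 0"
      using not_nonpos_Ints_add_of_nat[OF a, of k] by auto
    then have "pochhammer a (Suc k) / pochhammer b (Suc k) / (a + of_nat k) = 1 / b * q k"
      by (simp add: q_def pochhammer_rec[of b] pochhammer_rec'[of a])
    then show ?thesis
      using pochhammer_ratio_diff[OF Suc.prems(1), of a k]
      by (simp add: q_def rising_harm_Suc algebra_simps)
  qed
  have "binomial_transform (\<lambda>k. pochhammer a k / pochhammer b k * rising_harm a k) (Suc m)
      = (b - a) / b * binomial_transform (\<lambda>k. q k * rising_harm a k) m
        - 1 / b * binomial_transform q m"
    by (simp only: binomial_transform_Suc step binomial_transform_diff binomial_transform_cmult)
  also have "\<dots> = (b - a) / b * (- (pochhammer (b - a + 1) m / pochhammer (b + 1) m)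
        * rising_harm (b - a + 1) m) - 1 / b * (pochhammer (b - a + 1) m / pochhammer (b + 1) m)"
    using Suc.IH[OF b1] binomial_transform_pochhammer_ratio[OF b1(1), of a m]
    by (simp add: q_def algebra_simps)
  also have "\<dots> = - (pochhammer (b - a) (Suc m) / pochhammer b (Suc m)) * rising_harm (b - a) (Suc m)"
    using \<open>b \<noteq> 0\<close> \<open>b - a \<noteq> 0\<close> pochhammer_nonzero[OF b1(1), of m]
    by (simp add: pochhammer_rec rising_harm_Suc_left field_simps)
  finally show ?case .
qed simp

lemma sum_choose_diff_divide:
  "(\<Sum>j=1..n. of_nat ((n - j) choose k) / of_nat j :: 'a::real_normed_field)
     = of_nat (n choose k) * (harm n - harm k)"
proof (induction n arbitrary: k)
  case 0
  then show ?case
    by (cases k) (simp_all add: harm_def)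
next
  case (Suc n)
  show ?case
  proof (cases k)
    case 0
    then show ?thesis
      by (simp add: harm_def divide_inverse)
  next
    case (Suc i)
    have "(\<Sum>j=1..Suc n. of_nat ((Suc n - j) choose Suc i) / of_nat j :: 'a)
        = (\<Sum>j=1..n. of_nat ((n - j) choose i) / of_nat j + of_nat ((n - j) choose Suc i) / of_nat j)"
      by (auto simp: Suc_diff_le add_divide_distrib intro!: sum.cong)
    also have "\<dots> = of_nat (n choose i) * (harm n - harm i)
        + of_nat (n choose Suc i) * (harm n - harm (Suc i))"
      by (simp only: sum.distrib Suc.IH)
    also have "\<dots> = of_nat (Suc n choose Suc i) * (harm (Suc n) - harm (Suc i))"
    proof -
      have "of_nat (Suc i) * of_nat (Suc n choose Suc i) = (of_nat (Suc n) * of_nat (n choose i) :: 'a)"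
        by (metis Suc_times_binomial of_nat_mult)
      then have "of_nat (Suc n choose Suc i) / of_nat (Suc n) = (of_nat (n choose i) / of_nat (Suc i) :: 'a)"
        by (simp add: field_simps del: of_nat_Suc)
      then show ?thesis
        by (simp add: harm_Suc field_simps del: of_nat_Suc)
    qed
    finally show ?thesis
      using Suc by simp
  qed
qed

lemma binomial_transform_harm_mult:
  fixes a :: "nat \<Rightarrow> 'a::real_normed_field"
  shows "binomial_transform (\<lambda>k. harm k * a k) n
       = harm n * binomial_transform a n - (\<Sum>j=1..n. binomial_transform a (n - j) / of_nat j)"
proof -
  have "binomial_transform a (n - j) = (\<Sum>k\<le>n. (-1)^k * of_nat ((n - j) choose k) * a k)" for j
    unfolding binomial_transform_def
    by (rule sum.mono_neutral_left) (auto simp: binomial_eq_0)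
  then have "(\<Sum>j=1..n. binomial_transform a (n - j) / of_nat j)
      = (\<Sum>j=1..n. \<Sum>k\<le>n. (-1)^k * a k * (of_nat ((n - j) choose k) / of_nat j))"
    by (simp add: sum_divide_distrib algebra_simps)
  also have "\<dots> = (\<Sum>k\<le>n. (-1)^k * a k * (\<Sum>j=1..n. of_nat ((n - j) choose k) / of_nat j))"
    by (subst sum.swap) (simp add: sum_distrib_left)
  also have "\<dots> = (\<Sum>k\<le>n. (-1)^k * a k * (of_nat (n choose k) * (harm n - harm k)))"
    by (simp only: sum_choose_diff_divide)
  finally show ?thesis
    by (simp add: binomial_transform_def sum_distrib_left sum_subtractf[symmetric] algebra_simps)
qed

lemma negInts_iff: "z \<in> negInts \<longleftrightarrow> z + 1 \<in> \<int>\<^sub>\<le>\<^sub>0"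
proof
  assume "z \<in> negInts"
  then obtain m where "z = - of_nat (Suc m)"
    unfolding negInts_def by blast
  then have "z + 1 = - of_nat m"
    by simp
  then show "z + 1 \<in> \<int>\<^sub>\<le>\<^sub>0"
    by simp
next
  assume "z + 1 \<in> \<int>\<^sub>\<le>\<^sub>0"
  then obtain m where "z + 1 = - of_nat m"
    by (auto elim!: nonpos_Ints_cases')
  then have "z = - of_nat (Suc m)"
    by (simp add: algebra_simps eq_neg_iff_add_eq_0)
  then show "z \<in> negInts"
    unfolding negInts_def by blast
qed

lemma nonpos_Ints_eq_insert_negInts: "(\<int>\<^sub>\<le>\<^sub>0 :: complex set) = insert 0 negInts"
proof (intro set_eqI iffI)
  fix z :: complex
  assume "z \<in> \<int>\<^sub>\<le>\<^sub>0"
  then obtain m where "z = - of_nat m"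
    by (auto elim!: nonpos_Ints_cases')
  then show "z \<in> insert 0 negInts"
    unfolding negInts_def by (cases m) auto
qed (auto simp: negInts_def simp del: of_nat_Suc)

lemma Hc_plus1:
  assumes "z + 1 \<notin> \<int>\<^sub>\<le>\<^sub>0"
  shows "Hc (z + 1) = Hc z + 1 / (z + 1)"
proof -
  have "z + 1 \<noteq> 0"
    using assms by auto
  show ?thesis
    unfolding Hc_def Digamma_plus1[OF \<open>z + 1 \<noteq> 0\<close>] by simp
qed

lemma Hc_add_of_nat:
  assumes "z + 1 \<notin> \<int>\<^sub>\<le>\<^sub>0"
  shows "Hc (z + of_nat k) = Hc z + rising_harm (z + 1) k"
proof (induction k)
  case (Suc k)
  have "z + of_nat k + 1 \<notin> \<int>\<^sub>\<le>\<^sub>0"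
    using not_nonpos_Ints_add_of_nat[OF assms, of k] by (simp add: add_ac)
  then show ?case
    using Hc_plus1[of "z + of_nat k"] Suc by (simp add: rising_harm_Suc add_ac)
qed simp

lemma Gamma_add_of_nat:
  fixes z :: "'a::Gamma"
  assumes "z \<notin> \<int>\<^sub>\<le>\<^sub>0"
  shows "Gamma (z + of_nat k) = pochhammer z k * Gamma z"
  using pochhammer_Gamma[OF assms, of k] Gamma_nonzero[OF assms] by (simp add: field_simps)

lemma inverse_cbinom_add_of_nat:
  assumes "x + 1 \<notin> \<int>\<^sub>\<le>\<^sub>0" "x - y + 1 \<notin> \<int>\<^sub>\<le>\<^sub>0"
  shows "1 / cbinom (of_nat k + x) y
       = pochhammer (x - y + 1) k / pochhammer (x + 1) k * (1 / cbinom x y)"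
proof -
  have shift: "of_nat k + x + 1 = (x + 1) + of_nat k" "of_nat k + x - y + 1 = (x - y + 1) + of_nat k"
    by simp_all
  show ?thesis
    unfolding cbinom_def shift Gamma_add_of_nat[OF assms(1)] Gamma_add_of_nat[OF assms(2)]
    by (simp add: divide_inverse mult_ac)
qed

(* Symmetry C(r, r-s+1) = C(r, s-1) combined with absorption s C(r,s) = (r-s+1) C(r,s-1). *)
lemma inverse_cbinom_complement:
  assumes "s \<notin> \<int>\<^sub>\<le>\<^sub>0" "r - s + 1 \<notin> \<int>\<^sub>\<le>\<^sub>0"
  shows "1 / cbinom r (r - s + 1) = (r - s + 1) / s * (1 / cbinom r s)"
proof -
  have "s \<noteq> 0"
    using assms(1) by auto
  then show ?thesis
    unfolding cbinom_def using Gamma_plus1[OF assms(1)] Gamma_plus1[OF assms(2)]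
    by (simp add: divide_inverse mult_ac)
qed

lemma binomial_transform_Hc_cbinom:
  fixes r s :: complex
  assumes r: "r + 1 \<notin> \<int>\<^sub>\<le>\<^sub>0" and s: "s \<notin> \<int>\<^sub>\<le>\<^sub>0" and rs: "r - s + 1 \<notin> \<int>\<^sub>\<le>\<^sub>0"
  shows "binomial_transform (\<lambda>k. (Hc (of_nat k + r - s) - Hc s) / cbinom (of_nat k + r) s) m
       = s * (Hc (r - s + 1) - Hc (of_nat m + s - 1)) / ((r - s + 1) * cbinom (of_nat m + r) (r - s + 1))
         - (r + 1) / ((r - s + 1)^2 * cbinom (of_nat m + r) (r - s + 1))"
proof -
  define \<alpha> \<beta> c where "\<alpha> = r - s + 1" and "\<beta> = r + 1" and "c = 1 / cbinom r s"
  define ratio where "ratio = (\<lambda>k. pochhammer \<alpha> k / pochhammer \<beta> k)"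
  have "\<beta> - \<alpha> = s" and s1: "s - 1 + 1 \<notin> \<int>\<^sub>\<le>\<^sub>0"
    using s by (simp_all add: \<alpha>_def \<beta>_def)
  have summand: "(Hc (of_nat k + r - s) - Hc s) / cbinom (of_nat k + r) s
      = c * (ratio k * rising_harm \<alpha> k) + c * (Hc (r - s) - Hc s) * ratio k" for k
  proof -
    have "of_nat k + r - s = (r - s) + of_nat k"
      by simp
    then have "Hc (of_nat k + r - s) = Hc (r - s) + rising_harm \<alpha> k"
      using Hc_add_of_nat[OF rs[unfolded \<alpha>_def], of k] by (simp only: \<alpha>_def)
    moreover have "1 / cbinom (of_nat k + r) s = ratio k * c"
      using inverse_cbinom_add_of_nat[OF r rs, of k] by (simp add: ratio_def c_def \<alpha>_def \<beta>_def)
    ultimately show ?thesis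
      by (simp add: divide_inverse algebra_simps)
  qed
  have "binomial_transform (\<lambda>k. (Hc (of_nat k + r - s) - Hc s) / cbinom (of_nat k + r) s) m
      = c * (- (pochhammer s m / pochhammer \<beta> m) * rising_harm s m)
        + c * (Hc (r - s) - Hc s) * (pochhammer s m / pochhammer \<beta> m)"
  proof -
    have "\<alpha> \<notin> \<int>\<^sub>\<le>\<^sub>0" "\<beta> \<notin> \<int>\<^sub>\<le>\<^sub>0" "\<beta> - \<alpha> \<notin> \<int>\<^sub>\<le>\<^sub>0"
      using r s rs \<open>\<beta> - \<alpha> = s\<close> by (simp_all add: \<alpha>_def \<beta>_def)
    then have "binomial_transform ratio m = pochhammer s m / pochhammer \<beta> m"
      and "binomial_transform (\<lambda>k. ratio k * rising_harm \<alpha> k) m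
        = - (pochhammer s m / pochhammer \<beta> m) * rising_harm s m"
      using binomial_transform_pochhammer_ratio[of \<beta> \<alpha> m]
        binomial_transform_pochhammer_ratio_rising_harm[of \<alpha> \<beta> m]
      unfolding ratio_def \<open>\<beta> - \<alpha> = s\<close> by simp_all
    then show ?thesis
      by (simp only: summand binomial_transform_add binomial_transform_cmult)
  qed
  also have "\<dots> = (s * (Hc \<alpha> - Hc (of_nat m + s - 1)) / \<alpha> - \<beta> / \<alpha>^2)
      * (pochhammer s m / pochhammer \<beta> m * (\<alpha> / s * c))"
  proof -
    have H\<alpha>: "Hc \<alpha> = Hc (r - s) + 1 / \<alpha>"
      using Hc_plus1[OF rs] by (simp add: \<alpha>_def)
    have Hs: "Hc s = Hc (s - 1) + 1 / s"
      using Hc_plus1[OF s1] by simp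
    have Hsm: "Hc (of_nat m + s - 1) = Hc (s - 1) + rising_harm s m"
    proof -
      have shift: "of_nat m + s - 1 = (s - 1) + of_nat m"
        by simp
      show ?thesis
        unfolding shift using Hc_add_of_nat[OF s1, of m] by simp
    qed
    have "s \<noteq> 0" "\<alpha> \<noteq> 0" "pochhammer \<beta> m \<noteq> 0" and \<beta>: "\<beta> = \<alpha> + s"
      using s rs pochhammer_nonzero[OF r] by (auto simp: \<alpha>_def \<beta>_def)
    then show ?thesis
      unfolding H\<alpha> Hs Hsm \<beta> by (simp add: field_simps power2_eq_square)
  qed
  also have "\<dots> = s * (Hc \<alpha> - Hc (of_nat m + s - 1)) / (\<alpha> * cbinom (of_nat m + r) \<alpha>)
         - \<beta> / (\<alpha>^2 * cbinom (of_nat m + r) \<alpha>)"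
  proof -
    have "pochhammer s m / pochhammer \<beta> m * (\<alpha> / s * c) = 1 / cbinom (of_nat m + r) \<alpha>"
      using s inverse_cbinom_add_of_nat[OF r, of \<alpha> m] inverse_cbinom_complement[OF s rs]
      by (simp add: \<alpha>_def \<beta>_def c_def)
    then show ?thesis
      by (simp add: divide_inverse algebra_simps)
  qed
  finally show ?thesis
    by (simp add: \<alpha>_def \<beta>_def)
qed

lemma harm_binomial_sum_Hc_cbinom:
  fixes r s :: complex and n :: nat
  assumes "r \<notin> negInts" "s \<notin> negInts" "s \<noteq> 0" "r - s \<notin> negInts"
  shows "(\<Sum>k=1..n. (-1)^(k-1) * of_nat (n choose k) * harm k
         * (Hc (of_nat k + r - s) - Hc s) / cbinom (of_nat k + r) s)
     = - (r + 1) / (r - s + 1)^2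
         * (\<Sum>k=1..n. 1 / (of_nat k * cbinom (of_nat (n-k) + r) (r - s + 1)))
       - s / (r - s + 1)
         * (\<Sum>k=1..n. (Hc (of_nat (n-k) + s - 1) - Hc (r - s + 1))
              / (of_nat k * cbinom (of_nat (n-k) + r) (r - s + 1)))
       + (r + 1) * harm n / ((r - s + 1)^2 * cbinom (of_nat n + r) (r - s + 1))
       - s * harm n * (Hc (r - s + 1) - Hc (of_nat n + s - 1))
           / ((r - s + 1) * cbinom (of_nat n + r) (r - s + 1))"
proof -
  have r: "r + 1 \<notin> \<int>\<^sub>\<le>\<^sub>0" and rs: "r - s + 1 \<notin> \<int>\<^sub>\<le>\<^sub>0"
    using assms(1,4) by (simp_all add: negInts_iff)
  have s: "s \<notin> \<int>\<^sub>\<le>\<^sub>0"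
    using assms(2,3) by (simp add: nonpos_Ints_eq_insert_negInts)
  define \<alpha> \<beta> where "\<alpha> = r - s + 1" and "\<beta> = r + 1"
  define a where "a = (\<lambda>k. (Hc (of_nat k + r - s) - Hc s) / cbinom (of_nat k + r) s)"
  define C where "C = (\<lambda>m. cbinom (of_nat m + r) \<alpha>)"
  define F where "F = (\<lambda>m. s * (Hc \<alpha> - Hc (of_nat m + s - 1)) / (\<alpha> * C m) - \<beta> / (\<alpha>^2 * C m))"
  have BF: "binomial_transform a m = F m" for m
    unfolding a_def F_def C_def \<alpha>_def \<beta>_def by (rule binomial_transform_Hc_cbinom[OF r s rs])
  have "(\<Sum>k=1..n. (-1)^(k-1) * of_nat (n choose k) * harm k
         * (Hc (of_nat k + r - s) - Hc s) / cbinom (of_nat k + r) s)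
      = - (\<Sum>k=1..n. (-1)^k * of_nat (n choose k) * (harm k * a k))"
    unfolding sum_negf[symmetric]
  proof (rule sum.cong[OF refl])
    fix k
    assume "k \<in> {1..n}"
    then obtain j where "k = Suc j"
      by (cases k) auto
    then show "(-1)^(k-1) * of_nat (n choose k) * harm k
         * (Hc (of_nat k + r - s) - Hc s) / cbinom (of_nat k + r) s
       = - ((-1)^k * of_nat (n choose k) * (harm k * a k))"
      by (simp add: a_def)
  qed
  also have "\<dots> = - binomial_transform (\<lambda>k. harm k * a k) n"
    unfolding binomial_transform_def
    by (subst sum.mono_neutral_right[of "{..n}" "{1..n}"]) (auto simp: harm_def)
  also have "\<dots> = (\<Sum>j=1..n. F (n - j) / of_nat j) - harm n * F n"
    unfolding binomial_transform_harm_mult BF by simp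
  also have "(\<Sum>j=1..n. F (n - j) / of_nat j)
      = - \<beta> / \<alpha>^2 * (\<Sum>k=1..n. 1 / (of_nat k * C (n - k)))
        - s / \<alpha> * (\<Sum>k=1..n. (Hc (of_nat (n - k) + s - 1) - Hc \<alpha>) / (of_nat k * C (n - k)))"
    unfolding sum_distrib_left sum_subtractf[symmetric] F_def
    by (rule sum.cong[OF refl]) (simp add: divide_inverse algebra_simps)
  finally have "(\<Sum>k=1..n. (-1)^(k-1) * of_nat (n choose k) * harm k
         * (Hc (of_nat k + r - s) - Hc s) / cbinom (of_nat k + r) s)
      = - \<beta> / \<alpha>^2 * (\<Sum>k=1..n. 1 / (of_nat k * C (n - k)))
        - s / \<alpha> * (\<Sum>k=1..n. (Hc (of_nat (n - k) + s - 1) - Hc \<alpha>) / (of_nat k * C (n - k)))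
        - harm n * F n" .
  moreover have C: "cbinom (of_nat m + r) \<alpha> = C m" for m
    by (simp add: C_def)
  ultimately show ?thesis
    unfolding \<alpha>_def[symmetric] \<beta>_def[symmetric] C
    by (simp add: F_def divide_inverse algebra_simps)
qed

definition scaled_central_binom :: "nat \<Rightarrow> real" where
  "scaled_central_binom k = real ((2 * k) choose k) / 2 ^ (2 * k)"

lemma scaled_central_binom_pochhammer: "scaled_central_binom k = pochhammer (1 / 2) k / fact k"
proof -
  have "real ((2 * k) choose k) = fact (2 * k) / (fact k * fact k)"
    using binomial_fact[of k "2 * k"] by simp
  then show ?thesis
    unfolding scaled_central_binom_def fact_double by simp
qed

lemma scaled_central_binom_Suc:
  "scaled_central_binom (Suc k) = (2 * real k + 1) / (2 * (real k + 1)) * scaled_central_binom k"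
  unfolding scaled_central_binom_pochhammer by (simp add: pochhammer_rec' field_simps)

lemma pochhammer_2_eq_fact: "pochhammer (2 :: 'a::{comm_semiring_1,semiring_char_0}) k = fact (Suc k)"
  by (simp add: pochhammer_fact pochhammer_rec del: fact_Suc)

lemma scaled_central_binom_Suc_pochhammer:
  "scaled_central_binom (Suc k) = pochhammer (3 / 2) k / (2 * pochhammer 2 k)"
  unfolding scaled_central_binom_pochhammer pochhammer_2_eq_fact by (simp add: pochhammer_rec)

lemma rising_harm_half: "rising_harm (1 / 2) k = 2 * oharm k"
proof (induction k)
  case (Suc k)
  have "1 / (1 / 2 + real k) = 2 * (1 / (2 * real k + 1))"
    by (simp add: field_simps)
  then show ?case
    using Suc by (simp add: rising_harm_Suc oharm_def)
qed (simp add: oharm_def)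

lemma binomial_transform_scaled_central_binom_oharm:
  "binomial_transform (\<lambda>j. of_nat j * (2 * scaled_central_binom j * oharm j)) (Suc m)
     = scaled_central_binom m * (oharm m - 1)"
proof -
  define ratio where "ratio = (\<lambda>i. pochhammer (3 / 2) i / pochhammer (2::real) i)"
  define P where "P = pochhammer (1 / 2) m / pochhammer (2::real) m"
  have "(3 / 2 :: real) \<notin> \<int>\<^sub>\<le>\<^sub>0" "(2 :: real) \<notin> \<int>\<^sub>\<le>\<^sub>0" "(2 - 3 / 2 :: real) \<notin> \<int>\<^sub>\<le>\<^sub>0"
    by (auto dest: nonpos_Ints_nonpos)
  then have P1: "binomial_transform ratio m = P"
    and P2: "binomial_transform (\<lambda>i. ratio i * rising_harm (3 / 2) i) m = - P * rising_harm (1 / 2) m"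
    using binomial_transform_pochhammer_ratio[of 2 "3 / 2" m]
      binomial_transform_pochhammer_ratio_rising_harm[of "3 / 2" 2 m]
    by (simp_all add: ratio_def P_def)
  have oharm_Suc: "oharm (Suc i) = 1 + rising_harm (3 / 2) i / 2" for i
    using rising_harm_Suc_left[of "1 / 2 :: real" i] by (simp add: rising_harm_half)
  have summand: "2 * scaled_central_binom (Suc i) * oharm (Suc i)
      = ratio i + 1 / 2 * (ratio i * rising_harm (3 / 2) i)" for i
  proof -
    have "pochhammer (2::real) i \<noteq> 0"
      by (simp add: pochhammer_2_eq_fact)
    then show ?thesis
      unfolding scaled_central_binom_Suc_pochhammer oharm_Suc ratio_def by (simp add: field_simps)
  qed
  have "binomial_transform (\<lambda>j. of_nat j * (2 * scaled_central_binom j * oharm j)) (Suc m)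
      = of_nat (Suc m) * P * (oharm m - 1)"
    unfolding binomial_transform_of_nat_mult summand binomial_transform_add
      binomial_transform_cmult P1 P2 rising_harm_half
    by (simp add: algebra_simps)
  also have "of_nat (Suc m) * P = scaled_central_binom m"
    by (simp add: P_def scaled_central_binom_pochhammer pochhammer_2_eq_fact del: of_nat_Suc)
  finally show ?thesis .
qed

(* Since (2k+1)/(k+1) C(2k,k)/4^k = 2 C(2k+2,k+1)/4^(k+1), the sum is a binomial transform in the
   shifted index k+1; absorption moves it to index n+1, where H_j is no longer shifted. *)
lemma harm_oharm_central_binom_sum:
  fixes n :: nat
  shows "(\<Sum>k=0..n. (-1)^k * (2 * real k + 1) / (2^(2*k) * (real k + 1))
         * real (n choose k) * real ((2*k) choose k) * harm (k+1) * oharm (k+1))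
     = - real ((2*n) choose n) / (2^(2*n) * (real n + 1)) * harm (n+1) * (oharm n - 1)
       + 1 / (real n + 1) * (\<Sum>k=1..n. real ((2*(n-k)) choose (n-k))
            / (2^(2*(n-k)) * real k) * (oharm (n-k) - 1))"
proof -
  define g where "g = (\<lambda>j. 2 * scaled_central_binom j * oharm j)"
  define B where "B = binomial_transform (\<lambda>j. of_nat j * g j)"
  have B_Suc: "B (Suc m) = scaled_central_binom m * (oharm m - 1)" for m
    unfolding B_def g_def by (rule binomial_transform_scaled_central_binom_oharm)
  have "(\<Sum>k=0..n. (-1)^k * (2 * real k + 1) / (2^(2*k) * (real k + 1))
         * real (n choose k) * real ((2*k) choose k) * harm (k+1) * oharm (k+1))
      = binomial_transform (\<lambda>k. harm (Suc k) * g (Suc k)) n"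
    unfolding binomial_transform_def atLeast0AtMost
  proof (rule sum.cong[OF refl])
    fix k
    have central: "real ((2*k) choose k) = scaled_central_binom k * 2^(2*k)"
      by (simp add: scaled_central_binom_def)
    show "(-1)^k * (2 * real k + 1) / (2^(2*k) * (real k + 1))
         * real (n choose k) * real ((2*k) choose k) * harm (k+1) * oharm (k+1)
       = (-1)^k * of_nat (n choose k) * (harm (Suc k) * g (Suc k))"
      unfolding central by (simp add: g_def scaled_central_binom_Suc divide_simps)
  qed
  also have "\<dots> = - binomial_transform (\<lambda>j. of_nat j * (harm j * g j)) (Suc n) / (real n + 1)"
    unfolding binomial_transform_of_nat_mult by (simp add: field_simps)
  also have "binomial_transform (\<lambda>j. of_nat j * (harm j * g j)) (Suc n)
      = harm (Suc n) * B (Suc n) - (\<Sum>j=1..Suc n. B (Suc n - j) / of_nat j)"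
    using binomial_transform_harm_mult[of "\<lambda>j. of_nat j * g j" "Suc n"]
    by (simp add: B_def mult.left_commute)
  also note B_Suc[of n]
  also have "(\<Sum>j=1..Suc n. B (Suc n - j) / of_nat j)
      = (\<Sum>k=1..n. real ((2*(n-k)) choose (n-k)) / (2^(2*(n-k)) * real k) * (oharm (n-k) - 1))"
  proof -
    have "(\<Sum>j=1..Suc n. B (Suc n - j) / of_nat j) = (\<Sum>j=1..n. B (Suc (n - j)) / of_nat j)"
      by (simp add: B_def Suc_diff_le)
    then show ?thesis
      by (simp add: B_Suc scaled_central_binom_def)
  qed
  also have "- (harm (Suc n) * (scaled_central_binom n * (oharm n - 1))
        - (\<Sum>k=1..n. real ((2*(n-k)) choose (n-k)) / (2^(2*(n-k)) * real k) * (oharm (n-k) - 1)))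
        / (real n + 1)
      = - real ((2*n) choose n) / (2^(2*n) * (real n + 1)) * harm (n+1) * (oharm n - 1)
       + 1 / (real n + 1) * (\<Sum>k=1..n. real ((2*(n-k)) choose (n-k))
            / (2^(2*(n-k)) * real k) * (oharm (n-k) - 1))"
  proof -
    have "- (h * (c / p * (x - 1)) - S) / N = - c / (p * N) * h * (x - 1) + 1 / N * S"
      for h c p x S N :: real
      by (simp add: divide_inverse algebra_simps)
    then show ?thesis
      unfolding scaled_central_binom_def Suc_eq_plus1 .
  qed
  finally show ?thesis .
qed

theorem theorem11:
  shows "(\<forall>n::nat.
     (\<Sum>k=0..n. (-1)^k * (2 * real k + 1) / (2^(2*k) * (real k + 1))
         * real (n choose k) * real ((2*k) choose k) * harm (k+1) * oharm (k+1))
     = - real ((2*n) choose n) / (2^(2*n) * (real n + 1)) * harm (n+1) * (oharm n - 1)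
       + 1 / (real n + 1) * (\<Sum>k=1..n. real ((2*(n-k)) choose (n-k))
            / (2^(2*(n-k)) * real k) * (oharm (n-k) - 1)))
   \<and>
   (\<forall>(n::nat) (r::complex) (s::complex).
     r \<notin> negInts \<longrightarrow> s \<notin> negInts \<longrightarrow> s \<noteq> 0 \<longrightarrow> r - s \<notin> negInts \<longrightarrow>
     (\<Sum>k=1..n. (-1)^(k-1) * of_nat (n choose k) * harm k
         * (Hc (of_nat k + r - s) - Hc s) / cbinom (of_nat k + r) s)
     = - (r + 1) / (r - s + 1)^2
         * (\<Sum>k=1..n. 1 / (of_nat k * cbinom (of_nat (n-k) + r) (r - s + 1)))
       - s / (r - s + 1)
         * (\<Sum>k=1..n. (Hc (of_nat (n-k) + s - 1) - Hc (r - s + 1))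
              / (of_nat k * cbinom (of_nat (n-k) + r) (r - s + 1)))
       + (r + 1) * harm n / ((r - s + 1)^2 * cbinom (of_nat n + r) (r - s + 1))
       - s * harm n * (Hc (r - s + 1) - Hc (of_nat n + s - 1))
           / ((r - s + 1) * cbinom (of_nat n + r) (r - s + 1)))"
  using harm_oharm_central_binom_sum harm_binomial_sum_Hc_cbinom by blast

end
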